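(* Let $X$ be an abelian metric group and $f:X\to\mathbb{R}$ any function. Then: (i) if $f$ is locally bounded at some point, then $f$ is bounded on some shift-compact set in $X$; (ii) if $f$ is bounded on some shift-compact set in $X$, then $f$ is a WNT-function.
   Context: An abelian metric group is an abelian topological group whose topology is given by an invariant metric. A set $A\subset X$ is shift-compact if for every sequence $(x_n)$ tending to $0$ in $X$ there exists $x\in X$ such that $\{n\in\mathbb{N}: x+x_n\in A\}$ is infinite. Locally bounded at a point means $|f|$ is bounded on some neighbourhood of that point. For $k\in\mathbb{N}$ let $H^k:=f^{-1}((-k,k))$. $f$ is a WNT-function if for every convergent sequence $(u_n)_{n\in\mathbb{N}}$ in $X$ there exist $k\in\mathbb{N}$, an infinite set $\mathbb{M}\subset\mathbb{N}$ and $t\in X$ such that $\{t+u_m: m\in\mathbb{M}\}\subset H^k$. *)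

theory Defs
  imports "HOL-Analysis.Analysis"
begin

text \<open>An abelian metric group: a type of class ab_group_add and metric_space
  (so the topology is the metric topology) whose metric is translation invariant.\<close>
definition invariant_metric_group :: "('a::{ab_group_add, metric_space}) itself \<Rightarrow> bool" where
  "invariant_metric_group _ \<longleftrightarrow> (\<forall>x y z::'a. dist (x + z) (y + z) = dist x y)"

definition shift_compact :: "('a::{ab_group_add, metric_space}) set \<Rightarrow> bool" where
  "shift_compact A \<longleftrightarrow>
     (\<forall>xs::nat \<Rightarrow> 'a. xs \<longlonglongrightarrow> 0 \<longrightarrow> (\<exists>x. infinite {n. x + xs n \<in> A}))"

definition locally_bounded_at :: "('a::topological_space \<Rightarrow> real) \<Rightarrow> 'a \<Rightarrow> bool" where
  "locally_bounded_at f p \<longleftrightarrow> (\<exists>U B. open U \<and> p \<in> U \<and> (\<forall>x\<in>U. \<bar>f x\<bar> \<le> B))"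

definition bounded_on :: "('a \<Rightarrow> real) \<Rightarrow> 'a set \<Rightarrow> bool" where
  "bounded_on f A \<longleftrightarrow> (\<exists>B. \<forall>x\<in>A. \<bar>f x\<bar> \<le> B)"

definition Hk :: "('a \<Rightarrow> real) \<Rightarrow> nat \<Rightarrow> 'a set" where
  "Hk f k = f -` {-real k<..<real k}"

definition WNT_function :: "('a::{ab_group_add, metric_space} \<Rightarrow> real) \<Rightarrow> bool" where
  "WNT_function f \<longleftrightarrow>
     (\<forall>u::nat \<Rightarrow> 'a. convergent u \<longrightarrow>
        (\<exists>k::nat. \<exists>M::nat set. \<exists>t. infinite M \<and> (\<forall>m\<in>M. t + u m \<in> Hk f k)))"

end

theory Submission
  imports Defs
begin

lemma invariant_metric_groupD:
  assumes "invariant_metric_group TYPE('a::{ab_group_add, metric_space})"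
  shows "dist (c + x) (c + y) = dist x (y::'a)"
  using assms unfolding invariant_metric_group_def by (metis add.commute)

lemma tendsto_add_left_invariant:
  fixes xs :: "nat \<Rightarrow> 'a::{ab_group_add, metric_space}"
  assumes "invariant_metric_group TYPE('a)" and "xs \<longlonglongrightarrow> l"
  shows "(\<lambda>n. c + xs n) \<longlonglongrightarrow> c + l"
  using assms(2) unfolding tendsto_iff by (simp add: invariant_metric_groupD[OF assms(1)])

lemma infinite_eventually_sequentially:
  assumes "\<forall>\<^sub>F n in sequentially. P n"
  shows "infinite {n. P n}"
proof
  assume "finite {n. P n}"
  moreover have "finite {n. \<not> P n}"
    using assms by (simp add: eventually_cofinite[symmetric] cofinite_eq_sequentially)
  ultimately have "finite ({n. P n} \<union> {n. \<not> P n})" by (rule finite_UnI)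
  moreover have "{n. P n} \<union> {n. \<not> P n} = UNIV" by blast
  ultimately show False by simp
qed

text \<open>The translation p works: p + xs n tends to p, so eventually lies in U.\<close>

lemma open_imp_shift_compact:
  fixes U :: "'a::{ab_group_add, metric_space} set"
  assumes "invariant_metric_group TYPE('a)" and "open U" and "p \<in> U"
  shows "shift_compact U"
  unfolding shift_compact_def
proof (intro allI impI)
  fix xs :: "nat \<Rightarrow> 'a" assume "xs \<longlonglongrightarrow> 0"
  then have "(\<lambda>n. p + xs n) \<longlonglongrightarrow> p"
    using tendsto_add_left_invariant[OF assms(1)] by fastforce
  then have "\<forall>\<^sub>F n in sequentially. p + xs n \<in> U"
    using assms(2,3) topological_tendstoD by blast
  then show "\<exists>x. infinite {n. x + xs n \<in> U}"
    using infinite_eventually_sequentially by blast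
qed

lemma bounded_on_imp_subset_Hk:
  assumes "bounded_on f A"
  obtains k where "A \<subseteq> Hk f k"
proof -
  from assms obtain B where B: "\<forall>x\<in>A. \<bar>f x\<bar> \<le> B" unfolding bounded_on_def by blast
  have "B < real (nat \<lfloor>B\<rfloor> + 1)" by linarith
  with B have "A \<subseteq> Hk f (nat \<lfloor>B\<rfloor> + 1)" unfolding Hk_def by fastforce
  then show thesis by (rule that)
qed

text \<open>The limit L is absorbed into the translation: x + (u n - L) = (x - L) + u n.\<close>

lemma bounded_on_shift_compact_imp_WNT_function:
  fixes f :: "'a::{ab_group_add, metric_space} \<Rightarrow> real"
  assumes "invariant_metric_group TYPE('a)" and "shift_compact A" and "bounded_on f A"
  shows "WNT_function f"
  unfolding WNT_function_def
proof (intro allI impI)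
  fix u :: "nat \<Rightarrow> 'a" assume "convergent u"
  then obtain L where "u \<longlonglongrightarrow> L" unfolding convergent_def by blast
  then have "(\<lambda>n. - L + u n) \<longlonglongrightarrow> 0"
    using tendsto_add_left_invariant[OF assms(1), of u L "- L"] by simp
  then obtain x where x: "infinite {n. x + (- L + u n) \<in> A}"
    using assms(2) unfolding shift_compact_def by blast
  obtain k where "A \<subseteq> Hk f k" using bounded_on_imp_subset_Hk[OF assms(3)] .
  then have "\<forall>m\<in>{n. x + (- L + u n) \<in> A}. (x - L) + u m \<in> Hk f k"
    by (auto simp: algebra_simps)
  with x show "\<exists>k M t. infinite M \<and> (\<forall>m\<in>M. t + u m \<in> Hk f k)" by blast
qed

theorem proposition3p3:
  fixes f :: "'a::{ab_group_add, metric_space} \<Rightarrow> real"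
  assumes "invariant_metric_group TYPE('a)"
  shows "((\<exists>p. locally_bounded_at f p) \<longrightarrow> (\<exists>A. shift_compact A \<and> bounded_on f A))
       \<and> ((\<exists>A. shift_compact A \<and> bounded_on f A) \<longrightarrow> WNT_function f)"
proof (intro conjI impI)
  assume "\<exists>p. locally_bounded_at f p"
  then obtain p U B where "open U" "p \<in> U" "\<forall>x\<in>U. \<bar>f x\<bar> \<le> B"
    unfolding locally_bounded_at_def by blast
  then show "\<exists>A. shift_compact A \<and> bounded_on f A"
    using open_imp_shift_compact[OF assms] unfolding bounded_on_def by blast
next
  assume "\<exists>A. shift_compact A \<and> bounded_on f A"
  then show "WNT_function f"
    using bounded_on_shift_compact_imp_WNT_function[OF assms] by blast
qed

end
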